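(* Let $\mathbb F$ be a field and define $P_n:=z^2\bigl(y\,\mathrm{HC}_n+y^2\,\mathrm{HC}_n^2\bigr)$, where $y,z$ are variables distinct from the variables of $\mathrm{HC}_n$. Then the $\mathsf p$-family $(P)=(P_n)_{n\in\mathbb N}$ lies in $\mathrm{VNPC}(\trianglelefteq_{\mathsf p})$.
   Context: $\varepsilon$ is a new indeterminate. A $\mathsf p$-family $(f)=(f_n)_{n\in\mathbb N}$ is a sequence of multivariate polynomials whose number of variables and degree are polynomially bounded in $n$. For polynomials over a field $K$, $f\le g$ (projection) means $f=g(\alpha_1,\dots,\alpha_M)$ where each $\alpha_i$ is a variable of $f$ or an element of $K$; $(f)\le_{\mathsf p}(g)$ if there is a polynomially bounded $t$ with $f_n\le g_{t(n)}$ for all $n$. For $f,g$ over $\mathbb F$, $f\trianglelefteq g$ if $f+\varepsilon h\le g$ (projection over $\mathbb F(\varepsilon)$) for some polynomial $h$ over $\mathbb F[\varepsilon]$; $(f)\trianglelefteq_{\mathsf p}(g)$ if $f_n\trianglelefteq g_{t(n)}$ for all $n$ for some polynomially bounded $t$. $\mathrm{HC}_n=\sum_{\pi}\prod_{i=1}^n x_{i,\pi(i)}$, summing over permutations $\pi$ of $\{1,\dots,n\}$ that are $n$-cycles. $\mathrm{VNP}$ is the set of $\mathsf p$-families $(f)$ over $\mathbb F$ with $(f)\le_{\mathsf p}(\mathrm{HC})$, and $\mathrm{VNPC}(\trianglelefteq_{\mathsf p})=\{(f)\in\mathrm{VNP}:(\mathrm{HC})\trianglelefteq_{\mathsf p}(f)\}$.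 *)

theory Defs
  imports "HOL-Library.Poly_Mapping" "HOL-Library.Nat_Bijection"
    "HOL-Computational_Algebra.Polynomial" "HOL-Computational_Algebra.Fraction_Field" "HOL-Combinatorics.Permutations"
begin

text \<open>Multivariate polynomials over a coefficient ring 'a in the variables x_0, x_1, ... (indexed
  by nat): finitely supported maps from monomials (exponent vectors nat =>0 nat) to coefficients.\<close>

type_synonym 'a mpoly = "(nat \<Rightarrow>\<^sub>0 nat) \<Rightarrow>\<^sub>0 'a"

definition mVar :: "nat \<Rightarrow> 'a::comm_semiring_1 mpoly" where
  "mVar i = Poly_Mapping.single (Poly_Mapping.single i 1) 1"

definition mConst :: "'a::comm_semiring_1 \<Rightarrow> 'a mpoly" where
  "mConst c = Poly_Mapping.single 0 c"

definition mvars :: "'a::zero mpoly \<Rightarrow> nat set" where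
  "mvars p = (\<Union>m \<in> Poly_Mapping.keys p. Poly_Mapping.keys m)"

definition mdegree :: "'a::zero mpoly \<Rightarrow> nat" where
  "mdegree p = Max (insert 0 ((\<lambda>m. \<Sum>i\<in>Poly_Mapping.keys m. Poly_Mapping.lookup m i) ` Poly_Mapping.keys p))"

definition msubst :: "(nat \<Rightarrow> 'a::comm_semiring_1 mpoly) \<Rightarrow> 'a mpoly \<Rightarrow> 'a mpoly" where
  "msubst \<sigma> p = (\<Sum>m\<in>Poly_Mapping.keys p. mConst (Poly_Mapping.lookup p m) * (\<Prod>i\<in>Poly_Mapping.keys m. \<sigma> i ^ Poly_Mapping.lookup m i))"

definition proj_le :: "'a::comm_semiring_1 mpoly \<Rightarrow> 'a mpoly \<Rightarrow> bool" where
  "proj_le f g \<longleftrightarrow> (\<exists>\<alpha>. (\<forall>i. (\<exists>j. \<alpha> i = mVar j) \<or> (\<exists>c. \<alpha> i = mConst c)) \<and> f = msubst \<alpha> g)"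

definition poly_bounded :: "(nat \<Rightarrow> nat) \<Rightarrow> bool" where
  "poly_bounded t \<longleftrightarrow> (\<exists>c k. \<forall>n. t n \<le> c * (n + 1) ^ k)"

definition p_family :: "(nat \<Rightarrow> 'a::zero mpoly) \<Rightarrow> bool" where
  "p_family f \<longleftrightarrow> poly_bounded (\<lambda>n. card (mvars (f n))) \<and> poly_bounded (\<lambda>n. mdegree (f n))"

definition p_proj_le :: "(nat \<Rightarrow> 'a::comm_semiring_1 mpoly) \<Rightarrow> (nat \<Rightarrow> 'a mpoly) \<Rightarrow> bool" where
  "p_proj_le f g \<longleftrightarrow> (\<exists>t. poly_bounded t \<and> (\<forall>n. proj_le (f n) (g (t n))))"

text \<open>Border projection. F(eps) is the fraction field of F[eps]. Polynomials over F and F[eps]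
  are embedded coefficientwise into polynomials over F(eps).\<close>
definition eps :: "'a::field poly fract" where
  "eps = Fract [:0, 1:] 1"

definition lift_F :: "'a::field mpoly \<Rightarrow> 'a poly fract mpoly" where
  "lift_F f = Poly_Mapping.map (\<lambda>c. Fract [:c:] 1) f"

definition lift_Feps :: "'a::field poly mpoly \<Rightarrow> 'a poly fract mpoly" where
  "lift_Feps h = Poly_Mapping.map (\<lambda>c. Fract c 1) h"

definition border_le :: "'a::field mpoly \<Rightarrow> 'a mpoly \<Rightarrow> bool" where
  "border_le f g \<longleftrightarrow> (\<exists>h. proj_le (lift_F f + mConst eps * lift_Feps h) (lift_F g))"

definition p_border_le :: "(nat \<Rightarrow> 'a::field mpoly) \<Rightarrow> (nat \<Rightarrow> 'a mpoly) \<Rightarrow> bool" where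
  "p_border_le f g \<longleftrightarrow> (\<exists>t. poly_bounded t \<and> (\<forall>n. border_le (f n) (g (t n))))"

text \<open>Hamiltonian cycle polynomial. Variable x_{i,j} is mVar (xvar i j); the indices 0 and 1 are
  kept free for the extra variables y and z.\<close>
definition xvar :: "nat \<Rightarrow> nat \<Rightarrow> nat" where
  "xvar i j = prod_encode (i, j) + 2"

definition is_n_cycle :: "nat \<Rightarrow> (nat \<Rightarrow> nat) \<Rightarrow> bool" where
  "is_n_cycle n \<pi> \<longleftrightarrow> \<pi> permutes {1..n} \<and> (\<forall>i\<in>{1..n}. \<forall>j\<in>{1..n}. \<exists>k. (\<pi> ^^ k) i = j)"

definition HC :: "nat \<Rightarrow> 'a::comm_ring_1 mpoly" where
  "HC n = (\<Sum>\<pi> \<in> {\<pi>. is_n_cycle n \<pi>}. \<Prod>i\<in>{1..n}. mVar (xvar i (\<pi> i)))"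

definition VNP :: "(nat \<Rightarrow> 'a::comm_ring_1 mpoly) set" where
  "VNP = {f. p_family f \<and> p_proj_le f HC}"

definition VNPC_border :: "(nat \<Rightarrow> 'a::field mpoly) set" where
  "VNPC_border = {f. f \<in> VNP \<and> p_border_le HC f}"

end

theory Submission
  imports Defs "HOL-Library.FuncSet"
begin

text \<open>
  \<open>P\<^sub>n\<close> is a projection of \<open>HC\<^sub>6\<^sub>n\<close>: take two copies of the complete digraph on \<open>n\<close> vertices
  with arc weights \<open>x\<^sub>i\<^sub>j\<close>, split every vertex \<open>i \<ge> 2\<close> into a path of three vertices, and join the
  copies into a ring through arcs of weight \<open>y\<close> (into vertex \<open>1\<close> of a copy) and \<open>z\<close> (from one copy
  to the next). The second copy also gets a bypass of weight \<open>1\<close> that runs through all split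
  vertices backwards. A Hamiltonian cycle must traverse all split vertices of a copy in the same
  direction, so it either tours a copy along an \<open>n\<close>-cycle \<open>\<sigma>\<close>, picking up \<open>y z\<close> times the monomial
  of \<open>\<sigma>\<close> in \<open>HC\<^sub>n\<close>, or bypasses the second copy, picking up \<open>z\<close>. Hence the cycle sum is
  \<open>(y z HC\<^sub>n) (z + y z HC\<^sub>n) = P\<^sub>n\<close>. Conversely, substituting \<open>y := \<epsilon>\<^sup>2\<close> and \<open>z := \<epsilon>\<^sup>-\<^sup>1\<close> turns
  \<open>P\<^sub>n\<close> into \<open>HC\<^sub>n + \<epsilon>\<^sup>2 HC\<^sub>n\<^sup>2\<close>, so \<open>HC\<close> is a border projection of \<open>P\<close>.
\<close>

section \<open>Substitution and coefficient maps\<close>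

lemma mConst_0 [simp]: "mConst 0 = 0"
  by (simp add: mConst_def)

lemma mConst_1 [simp]: "mConst 1 = 1"
  by (simp add: mConst_def)

lemma mConst_add: "mConst (a + b) = mConst a + mConst b"
  by (simp add: mConst_def single_add)

lemma mConst_mult: "mConst (a * b) = mConst a * mConst b"
  by (simp add: mConst_def mult_single)

lemma mConst_power: "mConst (a ^ k) = (mConst a :: 'a::comm_semiring_1 mpoly) ^ k"
  by (induction k) (simp_all add: mConst_mult)

lemma poly_mapping_sum_singles:
  "p = (\<Sum>k\<in>Poly_Mapping.keys p. Poly_Mapping.single k (Poly_Mapping.lookup p k))"
  by (rule poly_mapping_eqI) (simp add: lookup_sum lookup_single when_def in_keys_iff)

definition monom_subst :: "(nat \<Rightarrow> 'a::comm_semiring_1 mpoly) \<Rightarrow> (nat \<Rightarrow>\<^sub>0 nat) \<Rightarrow> 'a mpoly" where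
  "monom_subst \<alpha> m = (\<Prod>i\<in>Poly_Mapping.keys m. \<alpha> i ^ Poly_Mapping.lookup m i)"

lemma monom_subst_superset:
  assumes "finite S" "Poly_Mapping.keys m \<subseteq> S"
  shows "monom_subst \<alpha> m = (\<Prod>i\<in>S. \<alpha> i ^ Poly_Mapping.lookup m i)"
  unfolding monom_subst_def
  by (rule prod.mono_neutral_left) (use assms in \<open>auto simp: in_keys_iff\<close>)

lemma monom_subst_add: "monom_subst \<alpha> (a + b) = monom_subst \<alpha> a * monom_subst \<alpha> b"
proof -
  let ?S = "Poly_Mapping.keys a \<union> Poly_Mapping.keys b"
  have fin: "finite ?S" by simp
  have "monom_subst \<alpha> (a + b) = (\<Prod>i\<in>?S. \<alpha> i ^ Poly_Mapping.lookup (a + b) i)"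
    by (rule monom_subst_superset[OF fin]) (simp add: keys_add)
  also have "\<dots> = monom_subst \<alpha> a * monom_subst \<alpha> b"
    by (simp add: lookup_add power_add prod.distrib monom_subst_superset[OF fin])
  finally show ?thesis .
qed

lemma msubst_superset:
  assumes "finite S" "Poly_Mapping.keys p \<subseteq> S"
  shows "msubst \<alpha> p = (\<Sum>m\<in>S. mConst (Poly_Mapping.lookup p m) * monom_subst \<alpha> m)"
  unfolding msubst_def monom_subst_def[symmetric]
  by (rule sum.mono_neutral_left) (use assms in \<open>auto simp: in_keys_iff\<close>)

lemma msubst_single: "msubst \<alpha> (Poly_Mapping.single m c) = mConst c * monom_subst \<alpha> m"
  by (subst msubst_superset[of "{m}"]) (auto simp: lookup_single)

lemma msubst_0 [simp]: "msubst \<alpha> 0 = 0"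
  by (simp add: msubst_def)

lemma msubst_add: "msubst \<alpha> (p + q) = msubst \<alpha> p + msubst \<alpha> q"
proof -
  let ?S = "Poly_Mapping.keys p \<union> Poly_Mapping.keys q"
  have fin: "finite ?S" by simp
  show ?thesis
    by (simp add: msubst_superset[OF fin] keys_add lookup_add mConst_add distrib_right sum.distrib)
qed

lemma msubst_sum: "msubst \<alpha> (\<Sum>x\<in>A. f x) = (\<Sum>x\<in>A. msubst \<alpha> (f x))"
  by (induction A rule: infinite_finite_induct) (auto simp: msubst_add)

lemma msubst_mult: "msubst \<alpha> (p * q) = msubst \<alpha> p * msubst \<alpha> q"
proof -
  let ?c = "Poly_Mapping.lookup"
  have "p * q = (\<Sum>a\<in>Poly_Mapping.keys p. \<Sum>b\<in>Poly_Mapping.keys q.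
      Poly_Mapping.single a (?c p a) * Poly_Mapping.single b (?c q b))"
    by (subst poly_mapping_sum_singles[of p], subst poly_mapping_sum_singles[of q]) (rule sum_product)
  then have "msubst \<alpha> (p * q) = (\<Sum>a\<in>Poly_Mapping.keys p. \<Sum>b\<in>Poly_Mapping.keys q.
      mConst (?c p a) * monom_subst \<alpha> a * (mConst (?c q b) * monom_subst \<alpha> b))"
    by (simp only: msubst_sum mult_single msubst_single mConst_mult monom_subst_add mult_ac)
  also have "\<dots> = msubst \<alpha> p * msubst \<alpha> q"
    by (simp add: msubst_def monom_subst_def sum_product)
  finally show ?thesis .
qed

lemma msubst_mConst [simp]: "msubst \<alpha> (mConst c) = mConst c"
  by (simp add: mConst_def msubst_single monom_subst_def)

lemma msubst_1 [simp]: "msubst \<alpha> 1 = 1"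
  using msubst_mConst[of \<alpha> 1] by simp

lemma msubst_prod: "msubst \<alpha> (\<Prod>x\<in>A. f x) = (\<Prod>x\<in>A. msubst \<alpha> (f x))"
  by (induction A rule: infinite_finite_induct) (auto simp: msubst_mult)

lemma msubst_power: "msubst \<alpha> (p ^ k) = msubst \<alpha> p ^ k"
  by (induction k) (auto simp: msubst_mult)

lemma msubst_mVar [simp]: "msubst \<alpha> (mVar i) = \<alpha> i"
  by (simp add: mVar_def msubst_single monom_subst_def)

locale coeff_ring_hom =
  fixes \<phi> :: "'a::comm_ring_1 \<Rightarrow> 'b::comm_ring_1"
  assumes hom_0: "\<phi> 0 = 0" and hom_1: "\<phi> 1 = 1"
    and hom_add: "\<phi> (a + b) = \<phi> a + \<phi> b" and hom_mult: "\<phi> (a * b) = \<phi> a * \<phi> b"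
begin

lemma lookup_map: "Poly_Mapping.lookup (Poly_Mapping.map \<phi> p) k = \<phi> (Poly_Mapping.lookup p k)"
  by (simp add: Poly_Mapping.map.rep_eq when_def hom_0)

lemma map_add: "Poly_Mapping.map \<phi> (p + q) = Poly_Mapping.map \<phi> p + Poly_Mapping.map \<phi> q"
  by (rule poly_mapping_eqI) (simp add: lookup_map lookup_add hom_add)

lemma map_sum: "Poly_Mapping.map \<phi> (\<Sum>x\<in>A. f x) = (\<Sum>x\<in>A. Poly_Mapping.map \<phi> (f x))"
  by (induction A rule: infinite_finite_induct) (auto simp: map_add hom_0 map_eq_zero_iff)

lemma map_single: "Poly_Mapping.map \<phi> (Poly_Mapping.single k c) = Poly_Mapping.single k (\<phi> c)"
  by (simp add: hom_0)

lemma map_mult: "Poly_Mapping.map \<phi> (p * q) = Poly_Mapping.map \<phi> p * Poly_Mapping.map \<phi> q"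
proof -
  let ?c = "Poly_Mapping.lookup"
  let ?m = "Poly_Mapping.map \<phi>"
  have "?m (p * q) = ?m (\<Sum>a\<in>Poly_Mapping.keys p. \<Sum>b\<in>Poly_Mapping.keys q.
      Poly_Mapping.single a (?c p a) * Poly_Mapping.single b (?c q b))"
    by (subst poly_mapping_sum_singles[of p], subst poly_mapping_sum_singles[of q]) (simp add: sum_product)
  also have "\<dots> = (\<Sum>a\<in>Poly_Mapping.keys p. Poly_Mapping.single a (\<phi> (?c p a))) *
      (\<Sum>b\<in>Poly_Mapping.keys q. Poly_Mapping.single b (\<phi> (?c q b)))"
    by (simp add: map_sum mult_single map_single hom_mult sum_product)
  also have "\<dots> = ?m p * ?m q"
    by (subst (3) poly_mapping_sum_singles[of p], subst (3) poly_mapping_sum_singles[of q])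
      (simp add: map_sum map_single)
  finally show ?thesis .
qed

lemma map_1: "Poly_Mapping.map \<phi> 1 = 1"
  using map_single[of 0 1] by (simp add: hom_1 flip: single_one)

lemma map_prod: "Poly_Mapping.map \<phi> (\<Prod>x\<in>A. f x) = (\<Prod>x\<in>A. Poly_Mapping.map \<phi> (f x))"
  by (induction A rule: infinite_finite_induct) (auto simp: map_mult map_1)

lemma map_power: "Poly_Mapping.map \<phi> (p ^ k) = Poly_Mapping.map \<phi> p ^ k"
  by (induction k) (auto simp: map_mult map_1)

lemma map_mVar: "Poly_Mapping.map \<phi> (mVar j) = mVar j"
  by (simp add: mVar_def map_single hom_1)

lemma map_mConst: "Poly_Mapping.map \<phi> (mConst c) = mConst (\<phi> c)"
  by (simp add: mConst_def map_single)

lemma map_HC: "Poly_Mapping.map \<phi> (HC n) = HC n"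
  by (simp add: HC_def map_sum map_prod map_mVar)

end

section \<open>Bounds on variables and degree\<close>

definition monom_degree :: "(nat \<Rightarrow>\<^sub>0 nat) \<Rightarrow> nat" where
  "monom_degree m = (\<Sum>i\<in>Poly_Mapping.keys m. Poly_Mapping.lookup m i)"

definition mpoly_within :: "nat \<Rightarrow> nat set \<Rightarrow> 'a::comm_semiring_1 mpoly \<Rightarrow> bool" where
  "mpoly_within d A p \<longleftrightarrow>
     (\<forall>m\<in>Poly_Mapping.keys p. Poly_Mapping.keys m \<subseteq> A \<and> monom_degree m \<le> d)"

lemma monom_degree_superset:
  "finite S \<Longrightarrow> Poly_Mapping.keys m \<subseteq> S \<Longrightarrow> monom_degree m = (\<Sum>i\<in>S. Poly_Mapping.lookup m i)"
  unfolding monom_degree_def by (rule sum.mono_neutral_left) (auto simp: in_keys_iff)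

lemma monom_degree_add: "monom_degree (a + b) = monom_degree a + monom_degree b"
proof -
  let ?S = "Poly_Mapping.keys a \<union> Poly_Mapping.keys b"
  have fin: "finite ?S" by simp
  show ?thesis
    by (simp add: monom_degree_superset[OF fin] keys_add monom_degree_superset[OF fin, of a]
        monom_degree_superset[OF fin, of b] lookup_add sum.distrib)
qed

lemma mpoly_within_mono: "mpoly_within d A p \<Longrightarrow> d \<le> d' \<Longrightarrow> A \<subseteq> A' \<Longrightarrow> mpoly_within d' A' p"
  unfolding mpoly_within_def by (meson order_trans subset_trans)

lemma mpoly_within_add: "mpoly_within d A p \<Longrightarrow> mpoly_within d A q \<Longrightarrow> mpoly_within d A (p + q)"
  unfolding mpoly_within_def using keys_add[of p q] by blast

lemma mpoly_within_sum: "(\<And>x. x \<in> X \<Longrightarrow> mpoly_within d A (f x)) \<Longrightarrow> mpoly_within d A (\<Sum>x\<in>X. f x)"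
  by (induction X rule: infinite_finite_induct) (auto simp: mpoly_within_add mpoly_within_def[of _ _ 0])

lemma mpoly_within_mult:
  assumes "mpoly_within d A p" "mpoly_within e A q"
  shows "mpoly_within (d + e) A (p * q)"
  unfolding mpoly_within_def
proof
  fix m assume "m \<in> Poly_Mapping.keys (p * q)"
  then obtain a b where ab: "m = a + b" "a \<in> Poly_Mapping.keys p" "b \<in> Poly_Mapping.keys q"
    using keys_mult by blast
  have "Poly_Mapping.keys a \<subseteq> A \<and> monom_degree a \<le> d" "Poly_Mapping.keys b \<subseteq> A \<and> monom_degree b \<le> e"
    using assms ab by (auto simp: mpoly_within_def)
  then show "Poly_Mapping.keys m \<subseteq> A \<and> monom_degree m \<le> d + e"
    using keys_add[of a b] by (auto simp: ab(1) monom_degree_add)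
qed

lemma mpoly_within_prod:
  "(\<And>x. x \<in> X \<Longrightarrow> mpoly_within 1 A (f x)) \<Longrightarrow> mpoly_within (card X) A (\<Prod>x\<in>X. f x)"
proof (induction X rule: infinite_finite_induct)
  case (insert x F)
  then show ?case using mpoly_within_mult[of 1 A "f x" "card F"] by simp
qed (auto simp: mpoly_within_def monom_degree_def)

lemma mpoly_within_mVar: "j \<in> A \<Longrightarrow> mpoly_within 1 A (mVar j)"
  by (simp add: mpoly_within_def mVar_def monom_degree_def)

lemma mvars_subset_if_within: "mpoly_within d A p \<Longrightarrow> mvars p \<subseteq> A"
  unfolding mpoly_within_def mvars_def by blast

lemma mdegree_le_if_within:
  assumes "mpoly_within d A p"
  shows "mdegree p \<le> d"
proof -
  have "mdegree p = Max (insert 0 (monom_degree ` Poly_Mapping.keys p))"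
    by (simp add: mdegree_def monom_degree_def)
  also have "\<dots> \<le> d"
    using assms by (intro Max.boundedI) (auto simp: mpoly_within_def)
  finally show ?thesis .
qed

section \<open>Hamiltonian cycles as cyclic permutations\<close>

definition is_cycle_on :: "'v set \<Rightarrow> ('v \<Rightarrow> 'v) \<Rightarrow> bool" where
  "is_cycle_on V \<pi> \<longleftrightarrow> \<pi> permutes V \<and> (\<forall>i\<in>V. \<forall>j\<in>V. \<exists>k. (\<pi> ^^ k) i = j)"

lemma is_n_cycle_eq: "is_n_cycle n = is_cycle_on {1..n}"
  by (simp add: fun_eq_iff is_n_cycle_def is_cycle_on_def)

lemma HC_eq_cycle_sum: "HC n = (\<Sum>\<sigma>\<in>{\<sigma>. is_cycle_on {1..n} \<sigma>}. \<Prod>i\<in>{1..n}. mVar (xvar i (\<sigma> i)))"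
  by (simp add: HC_def is_n_cycle_eq)

lemma is_cycle_on_permutes: "is_cycle_on V \<pi> \<Longrightarrow> \<pi> permutes V"
  by (simp add: is_cycle_on_def)

lemma finite_cycles_on: "finite V \<Longrightarrow> finite {\<pi>. is_cycle_on V \<pi>}"
  by (rule finite_subset[OF _ finite_permutations[of V]]) (auto simp: is_cycle_on_def)

lemma is_cycle_on_closed_subset:
  assumes "is_cycle_on V \<pi>" "\<And>s. s \<in> S \<Longrightarrow> \<pi> s \<in> S" "x \<in> S" "x \<in> V"
  shows "V \<subseteq> S"
proof
  fix y assume "y \<in> V"
  then obtain k where k: "(\<pi> ^^ k) x = y" using assms(1,4) unfolding is_cycle_on_def by blast
  have "(\<pi> ^^ k) x \<in> S" for k
    by (induction k) (auto simp: assms(2,3))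
  then show "y \<in> S" using k by blast
qed

lemma is_cycle_on_no_fixpoint:
  assumes "is_cycle_on V \<pi>" "i \<in> V" "j \<in> V" "i \<noteq> j"
  shows "\<pi> i \<noteq> i"
proof
  assume "\<pi> i = i"
  then have "V \<subseteq> {i}"
    using assms by (intro is_cycle_on_closed_subset[of V \<pi> "{i}" i]) auto
  then show False using assms by blast
qed

lemma n_cycle_range:
  "is_cycle_on {1..n::nat} \<sigma> \<Longrightarrow> 1 \<le> i \<Longrightarrow> i \<le> n \<Longrightarrow> 1 \<le> \<sigma> i \<and> \<sigma> i \<le> n"
  using permutes_in_image[OF is_cycle_on_permutes, of "{1..n}" \<sigma> i] by auto

lemma n_cycle_not_1:
  "is_cycle_on {1..n::nat} \<sigma> \<Longrightarrow> 2 \<le> i \<Longrightarrow> i \<le> n \<Longrightarrow> \<sigma> i \<noteq> 1 \<Longrightarrow> 2 \<le> \<sigma> i \<and> \<sigma> i \<le> n"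
  using n_cycle_range[of n \<sigma> i] by auto

lemma n_cycle_no_fixpoint: "2 \<le> (n::nat) \<Longrightarrow> is_cycle_on {1..n} \<sigma> \<Longrightarrow> i \<in> {1..n} \<Longrightarrow> \<sigma> i \<noteq> i"
  by (rule is_cycle_on_no_fixpoint[of _ _ _ "if i = 1 then 2 else 1"]) auto

lemma n_cycle_1: "2 \<le> (n::nat) \<Longrightarrow> is_cycle_on {1..n} \<sigma> \<Longrightarrow> 2 \<le> \<sigma> 1 \<and> \<sigma> 1 \<le> n"
  using n_cycle_no_fixpoint[of n \<sigma> 1] n_cycle_range[of n \<sigma> 1] by auto

lemma n_cycle_eq_iff: "is_cycle_on {1..n::nat} \<sigma> \<Longrightarrow> \<sigma> i = \<sigma> j \<longleftrightarrow> i = j"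
  using permutes_inj[OF is_cycle_on_permutes] by (auto dest: injD)

lemma n_cycle_outside: "is_cycle_on {1..n::nat} \<sigma> \<Longrightarrow> i \<notin> {1..n} \<Longrightarrow> \<sigma> i = i"
  by (rule permutes_not_in[OF is_cycle_on_permutes])

lemma permutes_closed_complement:
  assumes perm: "\<pi> permutes V" and "finite V" "S \<subseteq> V" and closed: "\<forall>s\<in>S. \<pi> s \<in> S"
    and "v \<in> V - S"
  shows "\<pi> v \<in> V - S"
proof -
  have inj: "inj_on \<pi> V" using perm by (meson permutes_inj_on)
  have "finite S" using assms finite_subset by blast
  moreover have "\<pi> ` S \<subseteq> S" using closed by blast
  moreover have "card (\<pi> ` S) = card S" using card_image[OF inj_on_subset[OF inj \<open>S \<subseteq> V\<close>]] .
  ultimately have "\<pi> ` S = S" by (simp add: card_subset_eq)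
  have "\<pi> v \<notin> S"
  proof
    assume "\<pi> v \<in> S"
    then obtain s where "s \<in> S" "\<pi> s = \<pi> v" using \<open>\<pi> ` S = S\<close> by force
    then show False using assms inj by (auto dest: inj_onD)
  qed
  then show ?thesis using assms by (simp add: permutes_in_image)
qed

text \<open>To recognise a cyclic permutation of a finite set it suffices to check that every closed
  set containing one chosen element \<open>x\<^sub>0\<close> is everything: the complement of a closed set is closed.\<close>

lemma is_cycle_onI:
  assumes perm: "\<pi> permutes V" and fin: "finite V" and "x\<^sub>0 \<in> V"
    and closed: "\<And>S. S \<subseteq> V \<Longrightarrow> \<forall>s\<in>S. \<pi> s \<in> S \<Longrightarrow> x\<^sub>0 \<in> S \<Longrightarrow> V \<subseteq> S"
  shows "is_cycle_on V \<pi>"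
  unfolding is_cycle_on_def
proof (intro conjI perm ballI)
  fix i j assume "i \<in> V" "j \<in> V"
  define orb where "orb = range (\<lambda>k. (\<pi> ^^ k) i)"
  have "(\<pi> ^^ k) i \<in> V" for k
    by (induction k) (use \<open>i \<in> V\<close> perm in \<open>auto simp: permutes_in_image\<close>)
  then have sub: "orb \<subseteq> V" by (auto simp: orb_def)
  have step: "\<forall>s\<in>orb. \<pi> s \<in> orb"
    by (auto simp: orb_def intro!: range_eqI[of _ _ "Suc _"])
  have "i \<in> orb" by (auto simp: orb_def intro!: range_eqI[of _ _ 0])
  have "V \<subseteq> orb"
  proof (cases "x\<^sub>0 \<in> orb")
    case True
    then show ?thesis using closed[OF sub step] by blast
  next
    case False
    have "\<forall>s\<in>V - orb. \<pi> s \<in> V - orb"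
      using permutes_closed_complement[OF perm fin sub step] by blast
    then have "V \<subseteq> V - orb" using closed[of "V - orb"] False \<open>x\<^sub>0 \<in> V\<close> by blast
    then show ?thesis using \<open>i \<in> orb\<close> \<open>i \<in> V\<close> by blast
  qed
  then show "\<exists>k. (\<pi> ^^ k) i = j" using \<open>j \<in> V\<close> by (auto simp: orb_def)
qed

lemma funpow_map_permutation:
  assumes "bij_betw f U V" "\<pi> permutes U" "i \<in> U"
  shows "(map_permutation U f \<pi> ^^ k) (f i) = f ((\<pi> ^^ k) i)"
proof (induction k)
  case (Suc k)
  have "(\<pi> ^^ k) i \<in> U"
    by (induction k) (use assms in \<open>auto simp: permutes_in_image\<close>)
  then show ?case
    using Suc assms by (simp add: map_permutation_apply bij_betw_imp_inj_on)
qed simp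

lemma is_cycle_on_map_permutation:
  assumes f: "bij_betw f U V" and "is_cycle_on U \<pi>"
  shows "is_cycle_on V (map_permutation U f \<pi>)"
proof -
  have perm: "\<pi> permutes U" using assms by (simp add: is_cycle_on_def)
  show ?thesis unfolding is_cycle_on_def
  proof (intro conjI map_permutation_permutes[OF f perm] ballI)
    fix a b assume "a \<in> V" "b \<in> V"
    then obtain i j where "i \<in> U" "a = f i" "j \<in> U" "b = f j"
      using f by (auto simp: bij_betw_def)
    moreover obtain k where "(\<pi> ^^ k) i = j" using assms \<open>i \<in> U\<close> \<open>j \<in> U\<close> by (auto simp: is_cycle_on_def)
    ultimately show "\<exists>k. (map_permutation U f \<pi> ^^ k) a = b"
      using funpow_map_permutation[OF f perm] by metis
  qed
qed

lemma cycle_sum_reindex: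
  assumes f: "bij_betw f U V"
  shows "(\<Sum>\<pi>\<in>{\<pi>. is_cycle_on U \<pi>}. \<Prod>i\<in>U. W (f i) (f (\<pi> i))) =
         (\<Sum>\<rho>\<in>{\<rho>. is_cycle_on V \<rho>}. \<Prod>v\<in>V. (W v (\<rho> v) :: 'a::comm_semiring_1))"
proof (rule sum.reindex_bij_witness[of _ "map_permutation V (inv_into U f)" "map_permutation U f"])
  have g: "bij_betw (inv_into U f) V U" using f by (rule bij_betw_inv_into)
  fix \<rho> assume "\<rho> \<in> {\<rho>. is_cycle_on V \<rho>}"
  then have c: "is_cycle_on V \<rho>" by simp
  then show "map_permutation V (inv_into U f) \<rho> \<in> {\<pi>. is_cycle_on U \<pi>}"
    using is_cycle_on_map_permutation[OF g] by blast
  show "map_permutation U f (map_permutation V (inv_into U f) \<rho>) = \<rho>"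
    using map_permutation_compose_inv[OF g is_cycle_on_permutes[OF c]] f
    by (simp add: bij_betw_inv_into_right)
next
  fix \<pi> assume "\<pi> \<in> {\<pi>. is_cycle_on U \<pi>}"
  then have c: "is_cycle_on U \<pi>" by simp
  then show "map_permutation V (inv_into U f) (map_permutation U f \<pi>) = \<pi>"
    using map_permutation_compose_inv[OF f is_cycle_on_permutes[OF c]] f
    by (simp add: bij_betw_inv_into_left)
  show "map_permutation U f \<pi> \<in> {\<rho>. is_cycle_on V \<rho>}"
    using is_cycle_on_map_permutation[OF f c] by blast
  have "(\<Prod>v\<in>V. W v (map_permutation U f \<pi> v)) = (\<Prod>i\<in>U. W (f i) (map_permutation U f \<pi> (f i)))"
    by (rule prod.reindex_bij_betw[OF f, symmetric])
  also have "\<dots> = (\<Prod>i\<in>U. W (f i) (f (\<pi> i)))"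
    using f by (intro prod.cong) (simp_all add: map_permutation_apply bij_betw_imp_inj_on)
  finally show "(\<Prod>v\<in>V. W v (map_permutation U f \<pi> v)) = (\<Prod>i\<in>U. W (f i) (f (\<pi> i)))" .
qed

definition is_var_or_const :: "'a::comm_semiring_1 mpoly \<Rightarrow> bool" where
  "is_var_or_const p \<longleftrightarrow> (\<exists>j. p = mVar j) \<or> (\<exists>c. p = mConst c)"

lemma is_var_or_const_mVar [simp]: "is_var_or_const (mVar j)"
  by (auto simp: is_var_or_const_def)

lemma is_var_or_const_0 [simp]: "is_var_or_const 0"
  unfolding is_var_or_const_def by (metis mConst_0)

lemma is_var_or_const_1 [simp]: "is_var_or_const 1"
  unfolding is_var_or_const_def by (metis mConst_1)

lemma proj_le_iff: "proj_le f g \<longleftrightarrow> (\<exists>\<alpha>. (\<forall>i. is_var_or_const (\<alpha> i)) \<and> f = msubst \<alpha> g)"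
  by (simp add: proj_le_def is_var_or_const_def)

lemma proj_le_cycle_sum_HC:
  fixes W :: "'v \<Rightarrow> 'v \<Rightarrow> 'a::comm_ring_1 mpoly"
  assumes "finite V" and W: "\<And>u v. is_var_or_const (W u v)"
  shows "proj_le (\<Sum>\<pi>\<in>{\<pi>. is_cycle_on V \<pi>}. \<Prod>v\<in>V. W v (\<pi> v)) (HC (card V))"
proof -
  obtain f where f: "bij_betw f {1..card V} V"
    using finite_same_card_bij[of "{1..card V}" V] assms by auto
  define \<alpha> where
    "\<alpha> k = (if 2 \<le> k then (case prod_decode (k - 2) of (i, j) \<Rightarrow> W (f i) (f j)) else 0)" for k
  have \<alpha>_xvar: "\<alpha> (xvar i j) = W (f i) (f j)" for i j
    by (simp add: \<alpha>_def xvar_def)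
  have "is_var_or_const (\<alpha> k)" for k
    by (auto simp: \<alpha>_def W split: prod.split)
  moreover have "msubst \<alpha> (HC (card V)) =
      (\<Sum>\<pi>\<in>{\<pi>. is_cycle_on {1..card V} \<pi>}. \<Prod>i\<in>{1..card V}. W (f i) (f (\<pi> i)))"
    by (simp only: HC_eq_cycle_sum msubst_sum msubst_prod msubst_mVar \<alpha>_xvar)
  ultimately show ?thesis unfolding proj_le_iff cycle_sum_reindex[OF f] by metis
qed

section \<open>The two-gadget graph\<close>

text \<open>Gadget \<open>g\<close> is the complete digraph of \<open>HC\<^sub>n\<close> with vertex \<open>1\<close> as \<open>Hub g\<close> and every vertex
  \<open>i \<ge> 2\<close> split into the path \<open>In g i \<rightarrow> Mid g i \<rightarrow> Out g i\<close>. A tour of gadget \<open>g\<close> along an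
  \<open>n\<close>-cycle \<open>\<sigma>\<close> runs \<open>Entry g \<rightarrow> Hub g \<rightarrow> In g (\<sigma> 1) \<rightarrow> \<dots>\<close> and leaves through \<open>Exit g\<close>, the arc
  \<open>Exit g \<rightarrow> Entry (\<not> g)\<close> closing the ring. Gadget \<open>True\<close> can instead be bypassed along
  \<open>Entry \<rightarrow> Out 2 \<rightarrow> Mid 2 \<rightarrow> In 2 \<rightarrow> Out 3 \<rightarrow> \<dots> \<rightarrow> In n \<rightarrow> Hub \<rightarrow> Exit\<close>, which runs through every
  split vertex backwards.\<close>

datatype gvertex = Entry bool | Hub bool | Exit bool | In bool nat | Mid bool nat | Out bool nat

fun in_graph :: "nat \<Rightarrow> gvertex \<Rightarrow> bool" where
  "in_graph n (In g i) \<longleftrightarrow> 2 \<le> i \<and> i \<le> n"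
| "in_graph n (Mid g i) \<longleftrightarrow> 2 \<le> i \<and> i \<le> n"
| "in_graph n (Out g i) \<longleftrightarrow> 2 \<le> i \<and> i \<le> n"
| "in_graph n _ \<longleftrightarrow> True"

definition verts :: "nat \<Rightarrow> gvertex set" where
  "verts n = {v. in_graph n v}"

fun gadget :: "gvertex \<Rightarrow> bool" where
  "gadget (Entry g) = g" | "gadget (Hub g) = g" | "gadget (Exit g) = g"
| "gadget (In g i) = g" | "gadget (Mid g i) = g" | "gadget (Out g i) = g"

fun arc :: "nat \<Rightarrow> gvertex \<Rightarrow> gvertex \<Rightarrow> bool" where
  "arc n (Entry g) v \<longleftrightarrow> v = Hub g \<or> (g \<and> v = Out g 2)"
| "arc n (Hub g) v \<longleftrightarrow> (\<exists>j. v = In g j) \<or> v = Exit g"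
| "arc n (Exit g) v \<longleftrightarrow> v = Entry (\<not> g)"
| "arc n (In g i) v \<longleftrightarrow> v = Mid g i \<or> (i < n \<and> v = Out g (Suc i)) \<or> (i = n \<and> v = Hub g)"
| "arc n (Mid g i) v \<longleftrightarrow> v = In g i \<or> v = Out g i"
| "arc n (Out g i) v \<longleftrightarrow> v = Mid g i \<or> v = Exit g \<or> (\<exists>j. j \<noteq> i \<and> v = In g j)"

fun tour_step :: "(nat \<Rightarrow> nat) \<Rightarrow> gvertex \<Rightarrow> gvertex" where
  "tour_step \<sigma> (Entry g) = Hub g"
| "tour_step \<sigma> (Hub g) = In g (\<sigma> 1)"
| "tour_step \<sigma> (In g i) = Mid g i"
| "tour_step \<sigma> (Mid g i) = Out g i"
| "tour_step \<sigma> (Out g i) = (if \<sigma> i = 1 then Exit g else In g (\<sigma> i))"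
| "tour_step \<sigma> (Exit g) = Entry (\<not> g)"

fun bypass_step :: "nat \<Rightarrow> gvertex \<Rightarrow> gvertex" where
  "bypass_step n (Entry g) = Out g 2"
| "bypass_step n (Out g i) = Mid g i"
| "bypass_step n (Mid g i) = In g i"
| "bypass_step n (In g i) = (if i = n then Hub g else Out g (Suc i))"
| "bypass_step n (Hub g) = Exit g"
| "bypass_step n (Exit g) = Entry (\<not> g)"

text \<open>A mode of a gadget is \<open>None\<close> for the bypass or \<open>Some \<sigma>\<close> for the tour along \<open>\<sigma>\<close>.\<close>

fun mode_step :: "nat \<Rightarrow> (nat \<Rightarrow> nat) option \<Rightarrow> gvertex \<Rightarrow> gvertex" where
  "mode_step n None v = bypass_step n v"
| "mode_step n (Some \<sigma>) v = tour_step \<sigma> v"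

definition valid_mode :: "nat \<Rightarrow> bool \<Rightarrow> (nat \<Rightarrow> nat) option \<Rightarrow> bool" where
  "valid_mode n g m \<longleftrightarrow> (m = None \<and> g) \<or> (\<exists>\<sigma>. m = Some \<sigma> \<and> is_cycle_on {1..n} \<sigma>)"

definition mode_cycle :: "nat \<Rightarrow> (bool \<Rightarrow> (nat \<Rightarrow> nat) option) \<Rightarrow> gvertex \<Rightarrow> gvertex" where
  "mode_cycle n M v = (if in_graph n v then mode_step n (M (gadget v)) v else v)"

lemma finite_verts: "finite (verts n)"
proof -
  have "verts n \<subseteq> range Entry \<union> range Hub \<union> range Exit \<union> case_prod In ` (UNIV \<times> {2..n})
      \<union> case_prod Mid ` (UNIV \<times> {2..n}) \<union> case_prod Out ` (UNIV \<times> {2..n})"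
  proof
    fix v assume "v \<in> verts n"
    then show "v \<in> range Entry \<union> range Hub \<union> range Exit \<union> case_prod In ` (UNIV \<times> {2..n})
      \<union> case_prod Mid ` (UNIV \<times> {2..n}) \<union> case_prod Out ` (UNIV \<times> {2..n})"
      by (cases v) (auto simp: verts_def)
  qed
  then show ?thesis by (rule finite_subset) auto
qed

lemma verts_gadget_eq:
  "{v \<in> verts n. gadget v = g} =
     {Entry g, Hub g, Exit g} \<union> (In g ` {2..n} \<union> (Mid g ` {2..n} \<union> Out g ` {2..n}))"
proof
  show "{v \<in> verts n. gadget v = g} \<subseteq>
      {Entry g, Hub g, Exit g} \<union> (In g ` {2..n} \<union> (Mid g ` {2..n} \<union> Out g ` {2..n}))"
  proof
    fix v assume "v \<in> {v \<in> verts n. gadget v = g}"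
    then show "v \<in> {Entry g, Hub g, Exit g} \<union> (In g ` {2..n} \<union> (Mid g ` {2..n} \<union> Out g ` {2..n}))"
      by (cases v) (auto simp: verts_def)
  qed
qed (auto simp: verts_def)

lemma card_verts: "card (verts n) = 6 * n"
  if "2 \<le> n"
proof -
  have inj: "inj_on (In g) A" "inj_on (Mid g) A" "inj_on (Out g) A" for g A
    by (auto intro: inj_onI)
  have cg: "card {v \<in> verts n. gadget v = g} = 3 + 3 * (n - 1)" for g
    unfolding verts_gadget_eq
    by (subst card_Un_disjoint, simp, simp, fastforce)+ (simp_all add: card_image inj)
  have "verts n = {v \<in> verts n. gadget v = False} \<union> {v \<in> verts n. gadget v = True}"
    by auto
  then have "card (verts n) = card {v \<in> verts n. gadget v = False} + card {v \<in> verts n. gadget v = True}"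
    using finite_verts by (metis (no_types, lifting) card_Un_disjoint disjoint_iff finite_Un mem_Collect_eq)
  then show ?thesis using cg[of False] cg[of True] that by linarith
qed

lemma in_graph_tour_step:
  "2 \<le> (n::nat) \<Longrightarrow> is_cycle_on {1..n} \<sigma> \<Longrightarrow> in_graph n v \<Longrightarrow> in_graph n (tour_step \<sigma> v)"
  using n_cycle_1[of n \<sigma>] n_cycle_not_1[of n \<sigma>] by (cases v) auto

lemma arc_tour_step:
  "2 \<le> (n::nat) \<Longrightarrow> is_cycle_on {1..n} \<sigma> \<Longrightarrow> in_graph n v \<Longrightarrow> arc n v (tour_step \<sigma> v)"
  using n_cycle_no_fixpoint[of n \<sigma>] by (cases v) auto

lemma tour_step_inj:
  assumes "2 \<le> n" "is_cycle_on {1..n} \<sigma>" "in_graph n u" "in_graph n v" "gadget u = gadget v"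
    and "tour_step \<sigma> u = tour_step \<sigma> v"
  shows "u = v"
  using assms n_cycle_no_fixpoint[OF assms(1,2)] n_cycle_1[OF assms(1,2)] n_cycle_eq_iff[OF assms(2)]
  by (cases u; cases v) (auto split: if_splits intro: n_cycle_eq_iff[OF assms(2), THEN iffD1])

lemma in_graph_bypass_step: "2 \<le> n \<Longrightarrow> in_graph n v \<Longrightarrow> in_graph n (bypass_step n v)"
  by (cases v) auto

lemma arc_bypass_step: "2 \<le> n \<Longrightarrow> in_graph n v \<Longrightarrow> gadget v \<Longrightarrow> arc n v (bypass_step n v)"
  by (cases v) auto

lemma bypass_step_inj:
  "in_graph n u \<Longrightarrow> in_graph n v \<Longrightarrow> gadget u = gadget v \<Longrightarrow> bypass_step n u = bypass_step n v \<Longrightarrow> u = v"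
  by (cases u; cases v) (auto split: if_splits)

lemma mode_step_leaves_gadget: "gadget (mode_step n m v) \<noteq> gadget v \<Longrightarrow> v = Exit (gadget v)"
  by (cases m; cases v) (auto split: if_splits)

lemma mode_step_not_Entry: "mode_step n m v \<noteq> Entry (gadget v)"
  by (cases m; cases v) auto

lemma mode_step_Exit: "mode_step n m (Exit g) = Entry (\<not> g)"
  by (cases m) auto

context
  fixes n :: nat and M :: "bool \<Rightarrow> (nat \<Rightarrow> nat) option"
  assumes n2: "2 \<le> n" and valid: "\<And>g. valid_mode n g (M g)"
begin

lemma in_graph_mode_cycle: "in_graph n v \<Longrightarrow> in_graph n (mode_cycle n M v)"
  using valid[of "gadget v"] in_graph_tour_step[OF n2] in_graph_bypass_step[OF n2]
  by (auto simp: mode_cycle_def valid_mode_def)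

lemma arc_mode_cycle: "in_graph n v \<Longrightarrow> arc n v (mode_cycle n M v)"
  using valid[of "gadget v"] arc_tour_step[OF n2] arc_bypass_step[OF n2]
  by (auto simp: mode_cycle_def valid_mode_def)

lemma inj_on_mode_cycle: "inj_on (mode_cycle n M) (verts n)"
proof
  fix u v assume "u \<in> verts n" "v \<in> verts n" and eq: "mode_cycle n M u = mode_cycle n M v"
  then have u: "in_graph n u" and v: "in_graph n v" by (auto simp: verts_def)
  have eq': "mode_step n (M (gadget u)) u = mode_step n (M (gadget v)) v"
    using eq u v by (simp add: mode_cycle_def)
  show "u = v"
  proof (cases "gadget u = gadget v")
    case True
    show ?thesis
    proof (cases "M (gadget u)")
      case None
      then show ?thesis using eq' True bypass_step_inj[OF u v True] by simp
    next
      case (Some \<sigma>)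
      then have "is_cycle_on {1..n} \<sigma>" using valid[of "gadget u"] by (simp add: valid_mode_def)
      then show ?thesis using eq' True Some tour_step_inj[OF n2 _ u v True] by simp
    qed
  next
    case False
    have "u = Exit (gadget u) \<or> v = Exit (gadget v)"
      using mode_step_leaves_gadget[of n "M (gadget u)" u] mode_step_leaves_gadget[of n "M (gadget v)" v]
        eq' False by (cases "gadget u"; cases "gadget v") auto
    then show ?thesis
    proof (elim disjE)
      assume "u = Exit (gadget u)"
      then obtain g where "u = Exit g" by blast
      then show ?thesis using eq' False mode_step_not_Entry[of n "M (gadget v)" v]
        by (cases g) (auto simp: mode_step_Exit)
    next
      assume "v = Exit (gadget v)"
      then obtain g where "v = Exit g" by blast
      then show ?thesis using eq' False mode_step_not_Entry[of n "M (gadget u)" u]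
        by (cases g) (auto simp: mode_step_Exit)
    qed
  qed
qed

lemma mode_cycle_permutes: "mode_cycle n M permutes verts n"
proof (rule bij_imp_permutes)
  have "mode_cycle n M ` verts n \<subseteq> verts n" using in_graph_mode_cycle by (auto simp: verts_def)
  then have "mode_cycle n M ` verts n = verts n"
    by (rule endo_inj_surj[OF finite_verts _ inj_on_mode_cycle])
  then show "bij_betw (mode_cycle n M) (verts n) (verts n)"
    using inj_on_mode_cycle by (simp add: bij_betw_def)
qed (simp add: mode_cycle_def verts_def)

context
  fixes S :: "gvertex set"
  assumes closed: "\<forall>s\<in>S. mode_cycle n M s \<in> S"
begin

lemma mode_step_closed: "v \<in> S \<Longrightarrow> in_graph n v \<Longrightarrow> mode_step n (M (gadget v)) v \<in> S"
  using closed by (auto simp: mode_cycle_def)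

lemma closed_set_bypassed_gadget:
  assumes "M g = None" and "Entry g \<in> S"
  shows "{v \<in> verts n. gadget v = g} \<subseteq> S \<and> Entry (\<not> g) \<in> S"
proof -
  have step: "bypass_step n v \<in> S" if "v \<in> S" "in_graph n v" "gadget v = g" for v
    using mode_step_closed[OF that(1,2)] that(3) \<open>M g = None\<close> by simp
  have "Out g 2 \<in> S" using step[OF \<open>Entry g \<in> S\<close>] by simp
  have split: "Out g i \<in> S \<and> Mid g i \<in> S \<and> In g i \<in> S" if "2 \<le> i" "i \<le> n" for i
    using that
  proof (induction i rule: nat_induct_at_least)
    case base
    have "Mid g 2 \<in> S" using step[OF \<open>Out g 2 \<in> S\<close>] base by simp
    moreover have "In g 2 \<in> S" using step[OF calculation] base by simp
    ultimately show ?case using \<open>Out g 2 \<in> S\<close> by simp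
  next
    case (Suc i)
    have "Out g (Suc i) \<in> S" using step[of "In g i"] Suc by simp
    moreover have "Mid g (Suc i) \<in> S" using step[OF calculation] Suc.hyps Suc.prems by simp
    moreover have "In g (Suc i) \<in> S" using step[OF calculation(2)] Suc.hyps Suc.prems by simp
    ultimately show ?case by simp
  qed
  have "Hub g \<in> S" using step[of "In g n"] split[of n] n2 by simp
  moreover have "Exit g \<in> S" using step[OF \<open>Hub g \<in> S\<close>] by simp
  moreover have "Entry (\<not> g) \<in> S" using step[OF \<open>Exit g \<in> S\<close>] by simp
  ultimately show ?thesis
    using split \<open>Entry g \<in> S\<close> unfolding verts_gadget_eq by auto
qed

lemma closed_set_toured_gadget:
  assumes "M g = Some \<sigma>" and "Entry g \<in> S"
  shows "{v \<in> verts n. gadget v = g} \<subseteq> S \<and> Entry (\<not> g) \<in> S"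
proof -
  have \<sigma>: "is_cycle_on {1..n} \<sigma>" using valid[of g] assms by (simp add: valid_mode_def)
  have step: "tour_step \<sigma> v \<in> S" if "v \<in> S" "in_graph n v" "gadget v = g" for v
    using mode_step_closed[OF that(1,2)] that(3) \<open>M g = Some \<sigma>\<close> by simp
  have "Hub g \<in> S" using step[OF \<open>Entry g \<in> S\<close>] by simp
  have In_Out: "Mid g i \<in> S \<and> Out g i \<in> S" if "In g i \<in> S" "2 \<le> i" "i \<le> n" for i
    using step[OF that(1)] step[of "Mid g i"] that by simp
  define T where "T = insert 1 {i. 2 \<le> i \<and> i \<le> n \<and> In g i \<in> S}"
  have T_closed: "\<sigma> i \<in> T" if "i \<in> T" for i
  proof (cases "i = 1")
    case True
    then show ?thesis
      using step[OF \<open>Hub g \<in> S\<close>] n_cycle_1[OF n2 \<sigma>] by (simp add: T_def)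
  next
    case False
    then have i: "2 \<le> i" "i \<le> n" "In g i \<in> S" using that by (auto simp: T_def)
    then show ?thesis
      using step[of "Out g i"] In_Out[OF i(3,1,2)] n_cycle_not_1[OF \<sigma> i(1,2)]
      by (cases "\<sigma> i = 1") (auto simp: T_def)
  qed
  have "1 \<in> T" "1 \<in> {1..n}" using n2 by (auto simp: T_def)
  then have "{1..n} \<subseteq> T" using is_cycle_on_closed_subset[OF \<sigma> T_closed] by blast
  then have split: "In g i \<in> S \<and> Mid g i \<in> S \<and> Out g i \<in> S" if "2 \<le> i" "i \<le> n" for i
  proof -
    have "i \<in> T" using \<open>{1..n} \<subseteq> T\<close> that by auto
    then have "In g i \<in> S" using that by (simp add: T_def)
    then show ?thesis using In_Out that by blast
  qed
  obtain i where "\<sigma> i = 1" using permutes_surj[OF is_cycle_on_permutes[OF \<sigma>]] by (metis surjD)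
  moreover have "i \<in> {1..n}" using n_cycle_outside[OF \<sigma>, of i] \<open>\<sigma> i = 1\<close> n2 by fastforce
  moreover have "i \<noteq> 1" using \<open>\<sigma> i = 1\<close> n_cycle_1[OF n2 \<sigma>] by auto
  ultimately have "Exit g \<in> S" using step[of "Out g i"] split[of i] by simp
  moreover have "Entry (\<not> g) \<in> S" using step[OF \<open>Exit g \<in> S\<close>] by simp
  ultimately show ?thesis
    using split \<open>Entry g \<in> S\<close> \<open>Hub g \<in> S\<close> unfolding verts_gadget_eq by auto
qed

lemma closed_set_gadget:
  assumes "Entry g \<in> S"
  shows "{v \<in> verts n. gadget v = g} \<subseteq> S \<and> Entry (\<not> g) \<in> S"
  using closed_set_bypassed_gadget closed_set_toured_gadget assms by (cases "M g") auto

end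

lemma mode_cycle_is_cycle: "is_cycle_on (verts n) (mode_cycle n M)"
proof (rule is_cycle_onI[OF mode_cycle_permutes finite_verts])
  show "Entry True \<in> verts n" by (simp add: verts_def)
  fix S assume "\<forall>s\<in>S. mode_cycle n M s \<in> S" "Entry True \<in> S"
  then have "{v \<in> verts n. gadget v = True} \<subseteq> S" "{v \<in> verts n. gadget v = False} \<subseteq> S"
    using closed_set_gadget[of S True] closed_set_gadget[of S False] by auto
  then show "verts n \<subseteq> S" by blast
qed

end

section \<open>Hamiltonian cycles of the two-gadget graph\<close>

fun is_split :: "gvertex \<Rightarrow> bool" where
  "is_split (In g i) = True" | "is_split (Mid g i) = True" | "is_split (Out g i) = True"
| "is_split _ = False"

fun split_index :: "gvertex \<Rightarrow> nat" where
  "split_index (In g i) = i" | "split_index (Mid g i) = i" | "split_index (Out g i) = i"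
| "split_index _ = 1"

lemma arc_gadget: "arc n v w \<Longrightarrow> gadget w = gadget v \<or> (\<exists>h. v = Exit h \<and> w = Entry (\<not> h))"
  by (cases v) auto

context
  fixes n :: nat and \<pi> :: "gvertex \<Rightarrow> gvertex"
  assumes n2: "2 \<le> n" and cycle: "is_cycle_on (verts n) \<pi>"
    and along_arcs: "\<And>v. in_graph n v \<Longrightarrow> arc n v (\<pi> v)"
begin

lemma in_graph_cycle: "in_graph n v \<Longrightarrow> in_graph n (\<pi> v)"
  using permutes_in_image[OF is_cycle_on_permutes[OF cycle], of v] by (simp add: verts_def)

lemma cycle_outside: "\<not> in_graph n v \<Longrightarrow> \<pi> v = v"
  using permutes_not_in[OF is_cycle_on_permutes[OF cycle], of v] by (simp add: verts_def)

lemma cycle_eq_iff: "\<pi> u = \<pi> v \<longleftrightarrow> u = v"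
  using permutes_inj[OF is_cycle_on_permutes[OF cycle]] by (auto dest: injD)

lemma cycle_pred:
  assumes "in_graph n w"
  obtains u where "in_graph n u" "\<pi> u = w" "arc n u w"
proof -
  obtain u where u: "\<pi> u = w"
    using permutes_surj[OF is_cycle_on_permutes[OF cycle]] by (metis surjD)
  then have "in_graph n u" using assms cycle_outside by metis
  then show ?thesis using that u along_arcs by blast
qed

lemma cycle_closed_set:
  assumes "S \<subseteq> verts n" "\<And>s. s \<in> S \<Longrightarrow> \<pi> s \<in> S" "x \<in> S" "in_graph n y"
  shows "y \<in> S"
  using is_cycle_on_closed_subset[OF cycle, of S x] assms by (auto simp: verts_def)

lemma cycle_no_swap:
  assumes "in_graph n u" "\<pi> u = w" "\<pi> w = u"
  shows False
proof -
  have "in_graph n w" using assms in_graph_cycle by blast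
  then have "y \<in> {u, w}" if "in_graph n y" for y
    using cycle_closed_set[of "{u, w}" u y] assms that by (auto simp: verts_def)
  then have "Entry True \<in> {u, w}" "Entry False \<in> {u, w}" "Hub True \<in> {u, w}" by auto
  then show False by auto
qed

text \<open>In a Hamiltonian cycle along the arcs, every split vertex is traversed either forwards
  (\<open>In \<rightarrow> Mid \<rightarrow> Out\<close>) or backwards, and its direction propagates along \<open>i = 2, \<dots>, n\<close>.\<close>

definition forward :: "bool \<Rightarrow> nat \<Rightarrow> bool" where
  "forward g i \<longleftrightarrow> \<pi> (Mid g i) = Out g i"

context
  fixes g :: bool and i :: nat
  assumes i: "2 \<le> i" "i \<le> n"
begin

lemma backward_Mid: "\<not> forward g i \<Longrightarrow> \<pi> (Mid g i) = In g i"
  using along_arcs[of "Mid g i"] i by (auto simp: forward_def)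

lemma pred_Mid: "\<pi> (In g i) = Mid g i \<or> \<pi> (Out g i) = Mid g i"
proof -
  obtain u where "in_graph n u" "\<pi> u = Mid g i" "arc n u (Mid g i)"
    using cycle_pred[of "Mid g i"] i by auto
  moreover have "u = In g i \<or> u = Out g i" using \<open>arc n u (Mid g i)\<close> by (cases u) auto
  ultimately show ?thesis by auto
qed

lemma forward_In: "forward g i \<Longrightarrow> \<pi> (In g i) = Mid g i"
  using pred_Mid cycle_no_swap[of "Mid g i" "Out g i"] i by (auto simp: forward_def)

lemma backward_Out: "\<not> forward g i \<Longrightarrow> \<pi> (Out g i) = Mid g i"
  using pred_Mid cycle_no_swap[of "Mid g i" "In g i"] backward_Mid i by auto

lemma forward_Out:
  "forward g i \<Longrightarrow> \<pi> (Out g i) = Exit g \<or> (\<exists>j. j \<noteq> i \<and> \<pi> (Out g i) = In g j)"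
  using along_arcs[of "Out g i"] forward_In cycle_eq_iff[of "In g i" "Out g i"] i by auto

lemma backward_In:
  "\<not> forward g i \<Longrightarrow> (i < n \<and> \<pi> (In g i) = Out g (Suc i)) \<or> (i = n \<and> \<pi> (In g i) = Hub g)"
  using along_arcs[of "In g i"] backward_Out cycle_eq_iff[of "In g i" "Out g i"] i by auto

end

lemma forward_Suc_iff:
  assumes "2 \<le> i" "i < n"
  shows "forward g (Suc i) \<longleftrightarrow> forward g i"
proof
  assume "forward g (Suc i)"
  then have "\<pi> (Mid g (Suc i)) = Out g (Suc i)" by (simp add: forward_def)
  then show "forward g i"
    using backward_In[of i g] cycle_eq_iff[of "In g i" "Mid g (Suc i)"] assms by auto
next
  assume "forward g i"
  show "forward g (Suc i)"
  proof (rule ccontr)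
    assume "\<not> forward g (Suc i)"
    obtain u where "\<pi> u = Out g (Suc i)" "arc n u (Out g (Suc i))"
      using cycle_pred[of "Out g (Suc i)"] assms by auto
    moreover have "u = Mid g (Suc i) \<or> u = In g i"
      using \<open>arc n u (Out g (Suc i))\<close> assms by (cases u) auto
    ultimately show False
      using backward_Mid[OF _ _ \<open>\<not> forward g (Suc i)\<close>] forward_In[OF _ _ \<open>forward g i\<close>] assms by auto
  qed
qed

lemma forward_iff_forward_2: "2 \<le> i \<Longrightarrow> i \<le> n \<Longrightarrow> forward g i \<longleftrightarrow> forward g 2"
proof (induction i rule: nat_induct_at_least)
  case (Suc i)
  then show ?case using forward_Suc_iff[of i g] by simp
qed simp

lemma backward_gadget:
  assumes "\<not> forward g 2"
  shows "g" and "\<And>v. in_graph n v \<Longrightarrow> gadget v = g \<Longrightarrow> \<pi> v = bypass_step n v"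
proof -
  have bw: "\<not> forward g i" if "2 \<le> i" "i \<le> n" for i
    using forward_iff_forward_2[OF that, of g] assms by simp
  obtain u where u: "\<pi> u = Out g 2" "arc n u (Out g 2)" "in_graph n u"
    using cycle_pred[of "Out g 2"] n2 by auto
  moreover have "\<pi> (Mid g 2) = In g 2" using backward_Mid[OF _ n2 bw[OF _ n2]] by simp
  moreover have "u = Mid g 2 \<or> (u = Entry g \<and> g)" using u(2,3) by (cases u) auto
  ultimately have "u = Entry g" "g" by auto
  then show "g" by simp
  have "\<pi> (Hub g) \<noteq> In g j" for j
  proof
    assume Hub: "\<pi> (Hub g) = In g j"
    then have "2 \<le> j" "j \<le> n" using in_graph_cycle[of "Hub g"] by auto
    then show False
      using Hub backward_Mid[of j g] bw cycle_eq_iff[of "Hub g" "Mid g j"] by simp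
  qed
  then have "\<pi> (Hub g) = Exit g" using along_arcs[of "Hub g"] by auto
  fix v assume "in_graph n v" "gadget v = g"
  then show "\<pi> v = bypass_step n v"
    using u \<open>u = Entry g\<close> \<open>\<pi> (Hub g) = Exit g\<close> along_arcs[of v] backward_In[OF _ _ bw]
      backward_Mid[OF _ _ bw] backward_Out[OF _ _ bw]
    by (cases v) auto
qed

lemma forward_Entry: "forward g 2 \<Longrightarrow> \<pi> (Entry g) = Hub g"
  using along_arcs[of "Entry g"] cycle_eq_iff[of "Entry g" "Mid g 2"] by (auto simp: forward_def)

lemma forward_Hub:
  assumes fw: "forward g 2"
  obtains j where "2 \<le> j" "j \<le> n" "\<pi> (Hub g) = In g j"
proof -
  have fw_all: "forward g i" if "2 \<le> i" "i \<le> n" for i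
    using forward_iff_forward_2[OF that] fw by simp
  have "\<pi> (Hub g) \<noteq> Exit g"
  proof
    assume Hub: "\<pi> (Hub g) = Exit g"
    define S where "S = {v. in_graph n v \<and> gadget v = g \<and> is_split v}"
    have S_closed: "\<pi> s \<in> S" if "s \<in> S" for s
    proof -
      have s: "in_graph n s" "gadget s = g" "is_split s" using that by (auto simp: S_def)
      have "\<pi> s \<noteq> Exit g" using Hub cycle_eq_iff[of s "Hub g"] s(3) by auto
      show ?thesis
      proof (cases s)
        case (Out h i)
        then have "\<exists>j. \<pi> s = In g j"
          using forward_Out[of i g] fw_all[of i] s \<open>\<pi> s \<noteq> Exit g\<close> by auto
        then show ?thesis using in_graph_cycle[OF s(1)] by (auto simp: S_def)
      qed (use s in_graph_cycle[OF s(1)] forward_In[OF _ _ fw_all] fw_all in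
            \<open>auto simp: S_def forward_def\<close>)
    qed
    have "S \<subseteq> verts n" "In g 2 \<in> S" using n2 by (auto simp: S_def verts_def)
    then have "Entry g \<in> S" using cycle_closed_set[OF _ S_closed] by simp
    then show False by (simp add: S_def)
  qed
  then obtain j where "\<pi> (Hub g) = In g j" using along_arcs[of "Hub g"] by auto
  moreover have "2 \<le> j \<and> j \<le> n" using in_graph_cycle[of "Hub g"] calculation by auto
  ultimately show ?thesis using that by blast
qed

text \<open>In a forward gadget the cycle visits \<open>Hub g\<close> and the \<open>Out g i\<close> in the order of an
  \<open>n\<close>-cycle, read off from the indices of the successors (\<open>Exit g\<close> standing for \<open>1\<close>).\<close>

definition induced_cycle :: "bool \<Rightarrow> nat \<Rightarrow> nat" where
  "induced_cycle g k =
     (if k = 1 then split_index (\<pi> (Hub g))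
      else if 2 \<le> k \<and> k \<le> n then split_index (\<pi> (Out g k)) else k)"

context
  fixes g :: bool
  assumes fw: "forward g 2"
begin

lemma forward_all: "2 \<le> i \<Longrightarrow> i \<le> n \<Longrightarrow> forward g i"
  using forward_iff_forward_2[of i g] fw by simp

lemma Hub_induced_cycle: "\<pi> (Hub g) = In g (induced_cycle g 1) \<and> 2 \<le> induced_cycle g 1 \<and> induced_cycle g 1 \<le> n"
  using forward_Hub[OF fw] by (metis induced_cycle_def split_index.simps(1))

lemma Out_induced_cycle:
  assumes "2 \<le> i" "i \<le> n"
  shows "\<pi> (Out g i) = (if induced_cycle g i = 1 then Exit g else In g (induced_cycle g i))
    \<and> 1 \<le> induced_cycle g i \<and> induced_cycle g i \<le> n"
  using forward_Out[OF assms forward_all[OF assms]] in_graph_cycle[of "Out g i"] assms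
  by (auto simp: induced_cycle_def)

lemma forward_gadget_tour_step:
  "in_graph n v \<Longrightarrow> gadget v = g \<Longrightarrow> \<pi> v = tour_step (induced_cycle g) v"
  using forward_Entry[OF fw] Hub_induced_cycle along_arcs[of v] forward_In[OF _ _ forward_all]
    forward_all Out_induced_cycle
  by (cases v) (auto simp: forward_def)

lemma induced_cycle_permutes: "induced_cycle g permutes {1..n}"
proof -
  let ?\<rho> = "induced_cycle g"
  define visit where "visit k = (if k = 1 then Hub g else Out g k)" for k
  have \<pi>_visit: "\<pi> (visit k) = (if ?\<rho> k = 1 then Exit g else In g (?\<rho> k))" if "k \<in> {1..n}" for k
    using that Out_induced_cycle[of k] Hub_induced_cycle by (cases "k = 1") (auto simp: visit_def)
  have "?\<rho> k \<in> {1..n}" if "k \<in> {1..n}" for k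
    using that Out_induced_cycle[of k] Hub_induced_cycle by (cases "k = 1") auto
  then have range: "?\<rho> ` {1..n} \<subseteq> {1..n}" by blast
  have inj: "inj_on ?\<rho> {1..n}"
  proof
    fix a b assume "a \<in> {1..n}" "b \<in> {1..n}" "?\<rho> a = ?\<rho> b"
    then have "\<pi> (visit a) = \<pi> (visit b)" using \<pi>_visit by simp
    then show "a = b" using cycle_eq_iff by (auto simp: visit_def split: if_splits)
  qed
  have "bij_betw ?\<rho> {1..n} {1..n}"
    using endo_inj_surj[OF _ range inj] inj by (simp add: bij_betw_def)
  then show ?thesis by (rule bij_imp_permutes) (use n2 in \<open>auto simp: induced_cycle_def\<close>)
qed

lemma induced_cycle_is_cycle: "is_cycle_on {1..n} (induced_cycle g)"
proof (rule is_cycle_onI[OF induced_cycle_permutes])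
  let ?\<rho> = "induced_cycle g"
  fix T assume "T \<subseteq> {1..n}" and T_closed: "\<forall>s\<in>T. ?\<rho> s \<in> T" and "1 \<in> T"
  define S where "S = {v. in_graph n v \<and> (gadget v \<noteq> g \<or> \<not> is_split v \<or> split_index v \<in> T)}"
  have S_closed: "\<pi> s \<in> S" if "s \<in> S" for s
  proof (cases "gadget s = g")
    case False
    then show ?thesis
      using that arc_gadget[OF along_arcs[of s]] in_graph_cycle by (auto simp: S_def)
  next
    case True
    have "in_graph n s" "in_graph n (\<pi> s)" using that in_graph_cycle by (auto simp: S_def)
    moreover have "\<pi> s = tour_step ?\<rho> s" using forward_gadget_tour_step calculation(1) True .
    ultimately show ?thesis
      using that True T_closed \<open>1 \<in> T\<close> by (cases s) (auto simp: S_def split: if_splits)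
  qed
  have "S \<subseteq> verts n" "Entry g \<in> S" by (auto simp: S_def verts_def)
  show "{1..n} \<subseteq> T"
  proof
    fix k assume k: "k \<in> {1..n}"
    show "k \<in> T"
    proof (cases "k = 1")
      case False
      then have "in_graph n (In g k)" using k by auto
      then have "In g k \<in> S" using cycle_closed_set[OF \<open>S \<subseteq> verts n\<close> S_closed \<open>Entry g \<in> S\<close>] by blast
      then show ?thesis by (simp add: S_def)
    qed (use \<open>1 \<in> T\<close> in simp)
  qed
qed (use n2 in auto)

end

lemma cycle_eq_mode_cycle: "\<exists>M. (\<forall>g. valid_mode n g (M g)) \<and> \<pi> = mode_cycle n M"
proof (intro exI conjI allI)
  define M where "M g = (if forward g 2 then Some (induced_cycle g) else None)" for g
  show "valid_mode n g (M g)" for g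
    using induced_cycle_is_cycle backward_gadget(1) by (auto simp: M_def valid_mode_def)
  show "\<pi> = mode_cycle n M"
  proof
    fix v
    show "\<pi> v = mode_cycle n M v"
      using cycle_outside forward_gadget_tour_step backward_gadget(2)
      by (cases "in_graph n v") (auto simp: mode_cycle_def M_def)
  qed
qed

end

lemma mode_cycle_inj:
  assumes n2: "2 \<le> n" and valid1: "\<And>g. valid_mode n g (M\<^sub>1 g)" and valid2: "\<And>g. valid_mode n g (M\<^sub>2 g)"
    and eq: "mode_cycle n M\<^sub>1 = mode_cycle n M\<^sub>2"
  shows "M\<^sub>1 = M\<^sub>2"
proof
  fix g
  have step_eq: "mode_step n (M\<^sub>1 (gadget v)) v = mode_step n (M\<^sub>2 (gadget v)) v" if "in_graph n v" for v
    using fun_cong[OF eq, of v] that by (simp add: mode_cycle_def)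
  from step_eq[of "Entry g"] show "M\<^sub>1 g = M\<^sub>2 g"
  proof (cases "M\<^sub>1 g"; cases "M\<^sub>2 g")
    fix \<sigma>\<^sub>1 \<sigma>\<^sub>2 assume M: "M\<^sub>1 g = Some \<sigma>\<^sub>1" "M\<^sub>2 g = Some \<sigma>\<^sub>2"
    have \<sigma>: "is_cycle_on {1..n} \<sigma>\<^sub>1" "is_cycle_on {1..n} \<sigma>\<^sub>2"
      using valid1[of g] valid2[of g] M by (auto simp: valid_mode_def)
    have "\<sigma>\<^sub>1 k = \<sigma>\<^sub>2 k" for k
    proof -
      consider "k = 1" | "2 \<le> k \<and> k \<le> n" | "k \<notin> {1..n}" by fastforce
      then show ?thesis
      proof cases
        case 1
        then show ?thesis using step_eq[of "Hub g"] M by simp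
      next
        case 2
        then have "tour_step \<sigma>\<^sub>1 (Out g k) = tour_step \<sigma>\<^sub>2 (Out g k)" using step_eq[of "Out g k"] M by simp
        then show ?thesis by (auto split: if_splits)
      next
        case 3
        then show ?thesis using n_cycle_outside \<sigma> by metis
      qed
    qed
    then show ?thesis using M by auto
  qed auto
qed

lemma finite_valid_modes: "finite {m. valid_mode n g m}"
  by (rule finite_subset[of _ "insert None (Some ` {\<sigma>. is_cycle_on {1..n} \<sigma>})"])
    (auto simp: valid_mode_def finite_cycles_on)

lemma arc_cycles_eq_mode_cycles:
  assumes "2 \<le> n"
  shows "{\<pi>. is_cycle_on (verts n) \<pi> \<and> (\<forall>v\<in>verts n. arc n v (\<pi> v))} =
    mode_cycle n ` {M. \<forall>g. valid_mode n g (M g)}"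
proof (intro equalityI subsetI)
  fix \<pi> assume "\<pi> \<in> {\<pi>. is_cycle_on (verts n) \<pi> \<and> (\<forall>v\<in>verts n. arc n v (\<pi> v))}"
  then have cycle: "is_cycle_on (verts n) \<pi>" and along_arcs: "\<And>v. in_graph n v \<Longrightarrow> arc n v (\<pi> v)"
    by (auto simp: verts_def)
  show "\<pi> \<in> mode_cycle n ` {M. \<forall>g. valid_mode n g (M g)}"
    using cycle_eq_mode_cycle[OF assms cycle along_arcs] by blast
next
  fix \<pi> assume "\<pi> \<in> mode_cycle n ` {M. \<forall>g. valid_mode n g (M g)}"
  then obtain M where "\<And>g. valid_mode n g (M g)" "\<pi> = mode_cycle n M" by auto
  then show "\<pi> \<in> {\<pi>. is_cycle_on (verts n) \<pi> \<and> (\<forall>v\<in>verts n. arc n v (\<pi> v))}"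
    using mode_cycle_is_cycle[OF assms] arc_mode_cycle[OF assms] by (simp add: verts_def)
qed

lemma cycle_sum_along_arcs:
  assumes "finite V" and "\<And>u v. \<not> R u v \<Longrightarrow> W u v = 0"
  shows "(\<Sum>\<pi>\<in>{\<pi>. is_cycle_on V \<pi>}. \<Prod>v\<in>V. W v (\<pi> v)) =
    (\<Sum>\<pi>\<in>{\<pi>. is_cycle_on V \<pi> \<and> (\<forall>v\<in>V. R v (\<pi> v))}. \<Prod>v\<in>V. (W v (\<pi> v) :: 'a::comm_semiring_1))"
proof (rule sum.mono_neutral_right)
  show "\<forall>\<pi>\<in>{\<pi>. is_cycle_on V \<pi>} - {\<pi>. is_cycle_on V \<pi> \<and> (\<forall>v\<in>V. R v (\<pi> v))}. (\<Prod>v\<in>V. W v (\<pi> v)) = 0"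
    using assms by (auto intro: prod_zero)
qed (auto intro: finite_cycles_on assms)

lemma prod_mode_cycle:
  "(\<Prod>v\<in>verts n. f v (mode_cycle n M v)) =
    (\<Prod>g\<in>UNIV. \<Prod>v\<in>{v \<in> verts n. gadget v = g}. f v (mode_step n (M g) v))"
proof -
  have gadget_cong: "(\<Prod>v\<in>{v \<in> verts n. gadget v = g}. f v (mode_cycle n M v)) =
      (\<Prod>v\<in>{v \<in> verts n. gadget v = g}. f v (mode_step n (M g) v))" for g
    by (rule prod.cong) (auto simp: mode_cycle_def verts_def)
  have "(\<Prod>v\<in>verts n. h v) =
      (\<Prod>v\<in>{v \<in> verts n. gadget v = False}. h v) * (\<Prod>v\<in>{v \<in> verts n. gadget v = True}. h v)"
    for h :: "gvertex \<Rightarrow> 'a"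
    by (subst prod.union_disjoint[symmetric]) (auto intro: finite_subset[OF _ finite_verts] intro!: prod.cong)
  from this[of "\<lambda>v. f v (mode_cycle n M v)"] show ?thesis
    unfolding gadget_cong by (simp add: UNIV_bool)
qed

section \<open>Weights\<close>

text \<open>Arcs leaving \<open>Hub g\<close> and arcs entering \<open>Exit g\<close> play the arcs of \<open>HC\<^sub>n\<close> leaving and entering
  vertex \<open>1\<close>.\<close>

fun arc_label :: "(nat \<Rightarrow> nat \<Rightarrow> 'a) \<Rightarrow> 'a \<Rightarrow> 'a \<Rightarrow> gvertex \<Rightarrow> gvertex \<Rightarrow> 'a::comm_semiring_1" where
  "arc_label X y z (Entry g) v = (case v of Hub _ \<Rightarrow> y | _ \<Rightarrow> 1)"
| "arc_label X y z (Hub g) v = (case v of In _ j \<Rightarrow> X 1 j | _ \<Rightarrow> 1)"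
| "arc_label X y z (Exit g) v = z"
| "arc_label X y z (Out g i) v = (case v of In _ j \<Rightarrow> X i j | Exit _ \<Rightarrow> X i 1 | _ \<Rightarrow> 1)"
| "arc_label X y z (In g i) v = 1"
| "arc_label X y z (Mid g i) v = 1"

definition arc_weight :: "(nat \<Rightarrow> nat \<Rightarrow> 'a) \<Rightarrow> 'a \<Rightarrow> 'a \<Rightarrow> nat \<Rightarrow> gvertex \<Rightarrow> gvertex \<Rightarrow> 'a::comm_semiring_1" where
  "arc_weight X y z n u v = (if arc n u v then arc_label X y z u v else 0)"

lemma prod_gadget:
  "(\<Prod>v\<in>{v \<in> verts n. gadget v = g}. f v) = f (Entry g) * f (Hub g) * f (Exit g) *
     ((\<Prod>i\<in>{2..n}. f (In g i)) * ((\<Prod>i\<in>{2..n}. f (Mid g i)) * (\<Prod>i\<in>{2..n}. f (Out g i))))"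
proof -
  have inj: "inj_on (In g) A" "inj_on (Mid g) A" "inj_on (Out g) A" for A by (auto intro: inj_onI)
  show ?thesis
    unfolding verts_gadget_eq
    by (subst prod.union_disjoint, simp, simp, fastforce)+
      (simp add: prod.reindex[OF inj(1)] prod.reindex[OF inj(2)] prod.reindex[OF inj(3)] mult_ac)
qed

lemma tour_weight:
  assumes n2: "2 \<le> n" and \<sigma>: "is_cycle_on {1..n} \<sigma>"
  shows "(\<Prod>v\<in>{v \<in> verts n. gadget v = g}. arc_weight X y z n v (tour_step \<sigma> v))
    = y * z * (\<Prod>i\<in>{1..n}. X i (\<sigma> i))"
proof -
  have arc: "arc n v (tour_step \<sigma> v)" if "in_graph n v" for v using arc_tour_step[OF n2 \<sigma> that] .
  have "(\<Prod>i\<in>{2..n}. arc_weight X y z n (Out g i) (tour_step \<sigma> (Out g i))) = (\<Prod>i\<in>{2..n}. X i (\<sigma> i))"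
  proof (rule prod.cong[OF refl])
    fix i assume "i \<in> {2..n}"
    then have "arc n (Out g i) (tour_step \<sigma> (Out g i))" using arc[of "Out g i"] by simp
    then show "arc_weight X y z n (Out g i) (tour_step \<sigma> (Out g i)) = X i (\<sigma> i)"
      by (auto simp: arc_weight_def)
  qed
  moreover have "(\<Prod>i\<in>{2..n}. arc_weight X y z n (In g i) (tour_step \<sigma> (In g i))) = 1"
    "(\<Prod>i\<in>{2..n}. arc_weight X y z n (Mid g i) (tour_step \<sigma> (Mid g i))) = 1"
    using arc by (auto intro!: prod.neutral simp: arc_weight_def)
  moreover have "{1..n} = insert 1 {2..n}" using n2 by auto
  ultimately show ?thesis unfolding prod_gadget by (simp add: arc_weight_def mult_ac)
qed

lemma bypass_weight:
  assumes "2 \<le> n"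
  shows "(\<Prod>v\<in>{v \<in> verts n. gadget v = True}. arc_weight X y z n v (bypass_step n v)) = z"
proof -
  have "(\<Prod>i\<in>{2..n}. arc_weight X y z n (In True i) (bypass_step n (In True i))) = 1"
    "(\<Prod>i\<in>{2..n}. arc_weight X y z n (Mid True i) (bypass_step n (Mid True i))) = 1"
    "(\<Prod>i\<in>{2..n}. arc_weight X y z n (Out True i) (bypass_step n (Out True i))) = 1"
    by (auto intro!: prod.neutral simp: arc_weight_def)
  then show ?thesis unfolding prod_gadget by (simp add: arc_weight_def)
qed

lemma cycle_sum_gadget_graph:
  fixes X :: "nat \<Rightarrow> nat \<Rightarrow> 'a::comm_semiring_1"
  assumes n2: "2 \<le> n"
  defines "H \<equiv> \<Sum>\<sigma>\<in>{\<sigma>. is_cycle_on {1..n} \<sigma>}. \<Prod>i\<in>{1..n}. X i (\<sigma> i)"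
  shows "(\<Sum>\<pi>\<in>{\<pi>. is_cycle_on (verts n) \<pi>}. \<Prod>v\<in>verts n. arc_weight X y z n v (\<pi> v)) =
    z ^ 2 * (y * H + y ^ 2 * H ^ 2)"
proof -
  define G where "G g m = (\<Prod>v\<in>{v \<in> verts n. gadget v = g}. arc_weight X y z n v (mode_step n m v))"
    for g m
  have "(\<Sum>\<pi>\<in>{\<pi>. is_cycle_on (verts n) \<pi>}. \<Prod>v\<in>verts n. arc_weight X y z n v (\<pi> v)) =
      (\<Sum>\<pi>\<in>{\<pi>. is_cycle_on (verts n) \<pi> \<and> (\<forall>v\<in>verts n. arc n v (\<pi> v))}.
        \<Prod>v\<in>verts n. arc_weight X y z n v (\<pi> v))"
    by (rule cycle_sum_along_arcs[OF finite_verts]) (simp add: arc_weight_def)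
  also have "\<dots> =
      (\<Sum>M\<in>{M. \<forall>g. valid_mode n g (M g)}. \<Prod>v\<in>verts n. arc_weight X y z n v (mode_cycle n M v))"
    unfolding arc_cycles_eq_mode_cycles[OF n2]
    by (subst sum.reindex) (auto intro!: inj_onI mode_cycle_inj[OF n2])
  also have "\<dots> = (\<Sum>M\<in>{M. \<forall>g. valid_mode n g (M g)}. \<Prod>g\<in>UNIV. G g (M g))"
    by (simp only: prod_mode_cycle G_def)
  also have "\<dots> = (\<Prod>g\<in>UNIV. \<Sum>m\<in>{m. valid_mode n g m}. G g m)"
    by (subst prod_sum_PiE) (auto simp: PiE_UNIV_domain Pi_def finite_valid_modes)
  also have "\<dots> = (y * z * H) * (z + y * z * H)"
  proof -
    have toured: "(\<Sum>\<sigma>\<in>{\<sigma>. is_cycle_on {1..n} \<sigma>}. G g (Some \<sigma>)) = y * z * H" for g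
      by (simp add: G_def tour_weight[OF n2] H_def sum_distrib_left)
    have "{m. valid_mode n False m} = Some ` {\<sigma>. is_cycle_on {1..n} \<sigma>}"
      "{m. valid_mode n True m} = insert None (Some ` {\<sigma>. is_cycle_on {1..n} \<sigma>})"
      by (auto simp: valid_mode_def)
    moreover have "G True None = z"
      unfolding G_def mode_step.simps by (rule bypass_weight[OF n2])
    ultimately show ?thesis
      using toured finite_cycles_on[of "{1..n}"] by (simp add: UNIV_bool sum.reindex)
  qed
  also have "\<dots> = z ^ 2 * (y * H + y ^ 2 * H ^ 2)" by (simp add: algebra_simps power2_eq_square)
  finally show ?thesis .
qed

section \<open>Membership in VNP\<close>

definition wrap_yz :: "'a::comm_ring_1 mpoly \<Rightarrow> 'a mpoly" where
  "wrap_yz f = mVar 1 ^ 2 * (mVar 0 * f + mVar 0 ^ 2 * f ^ 2)"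

lemma poly_bounded_linear: "(\<And>n. t n \<le> c * (n + 1)) \<Longrightarrow> poly_bounded t"
  unfolding poly_bounded_def by (metis power_one_right)

lemma is_var_or_const_arc_weight:
  "(\<And>i j. is_var_or_const (X i j)) \<Longrightarrow> is_var_or_const (arc_weight X (mVar 0) (mVar 1) n u v)"
  by (cases u; cases v) (auto simp: arc_weight_def split: gvertex.splits)

lemma proj_le_wrap_yz_cycle_sum:
  fixes X :: "nat \<Rightarrow> nat \<Rightarrow> 'a::comm_ring_1 mpoly"
  assumes "2 \<le> m" "\<And>i j. is_var_or_const (X i j)"
  shows "proj_le (wrap_yz (\<Sum>\<sigma>\<in>{\<sigma>. is_cycle_on {1..m} \<sigma>}. \<Prod>i\<in>{1..m}. X i (\<sigma> i))) (HC (6 * m))"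
proof -
  have "proj_le (\<Sum>\<pi>\<in>{\<pi>. is_cycle_on (verts m) \<pi>}. \<Prod>v\<in>verts m. arc_weight X (mVar 0) (mVar 1) m v (\<pi> v))
      (HC (card (verts m)))"
    by (rule proj_le_cycle_sum_HC[OF finite_verts]) (rule is_var_or_const_arc_weight[OF assms(2)])
  then show ?thesis unfolding cycle_sum_gadget_graph[OF assms(1)] card_verts[OF assms(1)] wrap_yz_def .
qed

lemma cycles_on_empty: "{\<sigma>. is_cycle_on {} \<sigma>} = {id}"
  by (auto simp: is_cycle_on_def)

lemma cycles_on_singleton: "{\<sigma>. is_cycle_on {a} \<sigma>} = {id}"
  by (auto simp: is_cycle_on_def intro: exI[of _ 0])

lemma cycles_on_1_2: "{\<sigma>. is_cycle_on {1..2::nat} \<sigma>} = {transpose 1 2}"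
proof (intro equalityI subsetI)
  fix \<sigma> assume "\<sigma> \<in> {\<sigma>. is_cycle_on {1..2::nat} \<sigma>}"
  then have \<sigma>: "is_cycle_on {1..2} \<sigma>" by simp
  have "\<sigma> 1 = 2" "\<sigma> 2 = 1"
    using n_cycle_range[OF \<sigma>, of 1] n_cycle_range[OF \<sigma>, of 2] n_cycle_no_fixpoint[OF _ \<sigma>, of 1]
      n_cycle_no_fixpoint[OF _ \<sigma>, of 2] by auto
  moreover have "\<sigma> k = k" if "k \<notin> {1, 2}" for k
    using n_cycle_outside[OF \<sigma>, of k] that by auto
  ultimately have "\<sigma> = transpose 1 2" by (auto simp: transpose_def)
  then show "\<sigma> \<in> {transpose 1 2}" by simp
next
  fix \<sigma> assume "\<sigma> \<in> {transpose 1 2 :: nat \<Rightarrow> nat}"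
  then have "\<sigma> = transpose 1 2" by simp
  moreover have "\<exists>k. (transpose 1 2 ^^ k) i = j" if "i \<in> {1..2::nat}" "j \<in> {1..2}" for i j
  proof (cases "i = j")
    case False
    then have "(transpose 1 2 ^^ 1) i = j" using that by (auto simp: transpose_def)
    then show ?thesis by blast
  qed (auto intro: exI[of _ 0])
  ultimately show "\<sigma> \<in> {\<sigma>. is_cycle_on {1..2} \<sigma>}"
    by (simp add: is_cycle_on_def permutes_swap_id)
qed

lemma HC_0: "HC 0 = 1"
  by (simp add: HC_eq_cycle_sum cycles_on_empty)

lemma HC_1: "HC 1 = mVar (xvar 1 1)"
  by (simp add: HC_eq_cycle_sum cycles_on_singleton)

text \<open>For \<open>n < 2\<close> the gadget graph is built for \<open>n = 2\<close>, with the weights of the only \<open>2\<close>-cycle chosen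
  so that their product is \<open>HC\<^sub>n\<close>.\<close>

lemma proj_le_wrap_yz_HC: "proj_le (wrap_yz (HC n) :: 'a::comm_ring_1 mpoly) (HC (6 * max n 2))"
proof (cases "2 \<le> n")
  case True
  then show ?thesis
    using proj_le_wrap_yz_cycle_sum[OF True, of "\<lambda>i j. mVar (xvar i j)"]
    by (simp add: HC_eq_cycle_sum max_def)
next
  case False
  define X :: "nat \<Rightarrow> nat \<Rightarrow> 'a mpoly" where "X i j = (if i = 1 \<and> j = 2 \<and> n = 1 then mVar (xvar 1 1) else 1)" for i j
  have "{1..2::nat} = {1, 2}" by auto
  then have "(\<Sum>\<sigma>\<in>{\<sigma>. is_cycle_on {1..2} \<sigma>}. \<Prod>i\<in>{1..2}. X i (\<sigma> i)) = X 1 2 * X 2 1"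
    unfolding cycles_on_1_2 by simp
  also have "\<dots> = HC n"
  proof -
    have "n = 0 \<or> n = 1" using False by auto
    then show ?thesis using HC_1[where 'a='a] by (elim disjE) (simp_all add: X_def HC_0)
  qed
  finally have "(\<Sum>\<sigma>\<in>{\<sigma>. is_cycle_on {1..2} \<sigma>}. \<Prod>i\<in>{1..2}. X i (\<sigma> i)) = HC n" .
  moreover have "is_var_or_const (X i j)" for i j by (simp add: X_def)
  ultimately show ?thesis
    using False proj_le_wrap_yz_cycle_sum[of 2 X] by (simp add: max_def)
qed

lemma p_proj_le_wrap_yz_HC: "p_proj_le (\<lambda>n. wrap_yz (HC n)) HC"
  unfolding p_proj_le_def
proof (intro exI conjI allI)
  show "poly_bounded (\<lambda>n. 6 * max n 2)" by (rule poly_bounded_linear[of _ 12]) simp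
qed (rule proj_le_wrap_yz_HC)

definition HC_vars :: "nat \<Rightarrow> nat set" where
  "HC_vars n = (\<lambda>(i, j). xvar i j) ` ({1..n} \<times> {1..n})"

lemma finite_HC_vars: "finite (HC_vars n)"
  by (simp add: HC_vars_def)

lemma card_HC_vars: "card (HC_vars n) \<le> n * n"
  unfolding HC_vars_def using card_image_le[of "{1..n} \<times> {1..n}" "\<lambda>(i, j). xvar i j"]
  by (simp add: card_cartesian_product)

lemma mpoly_within_HC: "mpoly_within n (HC_vars n) (HC n)"
  unfolding HC_eq_cycle_sum
proof (intro mpoly_within_sum)
  fix \<pi> assume "\<pi> \<in> {\<pi>. is_cycle_on {1..n} \<pi>}"
  then have "\<pi> i \<in> {1..n}" if "i \<in> {1..n}" for i using n_cycle_range that by auto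
  then have "mpoly_within (card {1..n}) (HC_vars n) (\<Prod>i\<in>{1..n}. mVar (xvar i (\<pi> i)))"
    unfolding HC_vars_def
    by (intro mpoly_within_prod mpoly_within_mVar image_eqI[of _ _ "(i, \<pi> i)" for i]) auto
  then show "mpoly_within n (HC_vars n) (\<Prod>i\<in>{1..n}. mVar (xvar i (\<pi> i)))" by simp
qed

lemma mpoly_within_wrap_yz:
  assumes f: "mpoly_within d A f" and "0 \<in> A" "1 \<in> A"
  shows "mpoly_within (2 * d + 4) A (wrap_yz f)"
proof -
  have y: "mpoly_within 1 A (mVar 0)" using assms(2) by (rule mpoly_within_mVar)
  have z: "mpoly_within 1 A (mVar 1)" using assms(3) by (rule mpoly_within_mVar)
  have "mpoly_within (2 * d + 2) A (mVar 0 * f)"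
    by (rule mpoly_within_mono[OF mpoly_within_mult[OF y f]]) auto
  moreover have "mpoly_within (2 * d + 2) A (mVar 0 ^ 2 * f ^ 2)"
    unfolding power2_eq_square
    by (rule mpoly_within_mono[OF mpoly_within_mult[OF mpoly_within_mult[OF y y] mpoly_within_mult[OF f f]]])
      auto
  ultimately have "mpoly_within ((1 + 1) + (2 * d + 2)) A (mVar 1 * mVar 1 * (mVar 0 * f + mVar 0 ^ 2 * f ^ 2))"
    by (intro mpoly_within_mult[OF mpoly_within_mult[OF z z]] mpoly_within_add)
  then show ?thesis
    unfolding wrap_yz_def power2_eq_square[of "mVar 1"] by (rule mpoly_within_mono) auto
qed

lemma p_family_wrap_yz_HC: "p_family (\<lambda>n. wrap_yz (HC n))"
proof -
  have within: "mpoly_within (2 * n + 4) ({0, 1} \<union> HC_vars n) (wrap_yz (HC n))" for n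
    by (rule mpoly_within_wrap_yz[OF mpoly_within_mono[OF mpoly_within_HC]]) auto
  have "card (mvars (wrap_yz (HC n))) \<le> 2 * (n + 1) ^ 2" for n
  proof -
    have "card (mvars (wrap_yz (HC n))) \<le> card ({0, 1} \<union> HC_vars n)"
      by (rule card_mono[OF _ mvars_subset_if_within[OF within]]) (simp add: finite_HC_vars)
    also have "\<dots> \<le> 2 + n * n"
      using card_Un_le[of "{0, 1}" "HC_vars n"] card_HC_vars[of n] by simp
    also have "\<dots> \<le> 2 * (n + 1) ^ 2" by (simp add: power2_eq_square)
    finally show ?thesis .
  qed
  then have "poly_bounded (\<lambda>n. card (mvars (wrap_yz (HC n) :: 'a mpoly)))"
    unfolding poly_bounded_def by blast
  moreover have "poly_bounded (\<lambda>n. mdegree (wrap_yz (HC n) :: 'a mpoly))"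
    by (rule poly_bounded_linear[of _ 4]) (rule order_trans[OF mdegree_le_if_within[OF within]], simp)
  ultimately show ?thesis by (simp add: p_family_def)
qed

section \<open>Border projection\<close>

lemma eps_nonzero: "eps \<noteq> 0"
  by (simp add: eps_def Zero_fract_def eq_fract)

lemma border_le_HC_wrap_yz: "border_le (HC n) (wrap_yz (HC n) :: 'a::field mpoly)"
proof -
  interpret const_lift: coeff_ring_hom "\<lambda>c::'a. Fract [:c:] 1"
    by unfold_locales (simp_all add: Zero_fract_def One_fract_def one_pCons mult.commute)
  interpret fract_lift: coeff_ring_hom "\<lambda>c::'a poly. Fract c 1"
    by unfold_locales (simp_all add: Zero_fract_def One_fract_def)
  let ?H = "HC n :: 'a poly fract mpoly"
  define \<alpha> :: "nat \<Rightarrow> 'a poly fract mpoly" where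
    "\<alpha> k = (if k = 0 then mConst (eps ^ 2) else if k = 1 then mConst (inverse eps) else mVar k)" for k
  define h :: "'a poly mpoly" where "h = mConst [:0, 1:] * HC n ^ 2"
  have "is_var_or_const (\<alpha> k)" for k by (auto simp: \<alpha>_def is_var_or_const_def)
  moreover have "msubst \<alpha> (lift_F (wrap_yz (HC n))) = lift_F (HC n) + mConst eps * lift_Feps h"
  proof -
    have H: "msubst \<alpha> ?H = ?H"
      by (simp add: HC_def msubst_sum msubst_prod \<alpha>_def xvar_def)
    have "msubst \<alpha> (lift_F (wrap_yz (HC n))) =
        mConst (inverse eps) ^ 2 * (mConst (eps ^ 2) * ?H + mConst (eps ^ 2) ^ 2 * ?H ^ 2)"
      by (simp add: lift_F_def wrap_yz_def const_lift.map_mult const_lift.map_add const_lift.map_power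
          const_lift.map_mVar const_lift.map_HC msubst_add msubst_mult msubst_power H \<alpha>_def)
    also have "\<dots> = mConst (inverse eps ^ 2 * eps ^ 2) * ?H + mConst (inverse eps ^ 2 * (eps ^ 2) ^ 2) * ?H ^ 2"
      by (simp add: mConst_mult mConst_power algebra_simps)
    also have "\<dots> = ?H + mConst eps * (mConst eps * ?H ^ 2)"
    proof -
      have inverse_eps: "inverse eps ^ 2 * eps ^ 2 = 1" "inverse eps ^ 2 * (eps ^ 2) ^ 2 = eps * eps"
        using eps_nonzero by (simp_all add: field_simps power2_eq_square)
      show ?thesis by (simp only: inverse_eps mConst_1 mConst_mult mult_1 mult.assoc)
    qed
    also have "\<dots> = lift_F (HC n) + mConst eps * lift_Feps h"
      by (simp add: lift_F_def lift_Feps_def h_def const_lift.map_HC fract_lift.map_mult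
          fract_lift.map_power fract_lift.map_mConst fract_lift.map_HC eps_def)
    finally show ?thesis .
  qed
  ultimately show ?thesis unfolding border_le_def proj_le_iff by metis
qed

theorem lemma4:
  fixes P :: "nat \<Rightarrow> 'a::field mpoly"
  defines "P \<equiv> (\<lambda>n. mVar 1 ^ 2 * (mVar 0 * HC n + mVar 0 ^ 2 * HC n ^ 2))"
  shows "P \<in> VNPC_border"
proof -
  have P: "P = (\<lambda>n. wrap_yz (HC n))" by (simp add: P_def wrap_yz_def)
  have "p_border_le HC P"
    unfolding p_border_le_def P
    by (intro exI[of _ "\<lambda>n. n"] conjI allI border_le_HC_wrap_yz poly_bounded_linear[of _ 1]) simp
  then show ?thesis
    using p_family_wrap_yz_HC p_proj_le_wrap_yz_HC unfolding P by (simp add: VNPC_border_def VNP_def)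
qed

end
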